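(* Let $\alpha\in[0,\pi/2)$, $B,C,D\in M_n$, $A\in\Pi^n_{s,\alpha}$ and $q\in\mathbb{C}$ with $0<|q|\le1$. Then \[ |q|\,w_q(ACB\pm BDA)\le 2\sec(\alpha)\max\{\|C\|,\|D\|\}\,w_q(A)\,\|B\|. \]
   Context: $M_n$ is the algebra of complex $n\times n$ matrices with the operator norm $\|\cdot\|$. For $|q|\le1$, $w_q(A)=\sup\{|\langle Ax,y\rangle|: \|x\|=\|y\|=1,\ \langle x,y\rangle=q\}$. $W(A)=\{\langle Ax,x\rangle:\|x\|=1\}$, $S_\alpha=\{z:\operatorname{Re}z>0,\ |\operatorname{Im}z|\le\tan(\alpha)\operatorname{Re}z\}$ and $\Pi^n_{s,\alpha}=\{A\in M_n: W(A)\subseteq S_\alpha\}$. *)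

theory Defs
  imports "HOL-Analysis.Analysis"
begin

text \<open>Matrices in M_n are modelled as complex^'n^'n (n = CARD('n)).
  The standard inner product on C^n, linear in the first argument.\<close>
definition cinner :: "complex^'n \<Rightarrow> complex^'n \<Rightarrow> complex" where
  "cinner x y = (\<Sum>i\<in>UNIV. x$i * cnj (y$i))"

text \<open>Operator norm (induced by the Euclidean norm on C^n; the library norm on complex^'n is the l2 norm).\<close>
definition opnorm :: "complex^'n^'n \<Rightarrow> real" where
  "opnorm A = onorm (\<lambda>x. A *v x)"

text \<open>q-numerical radius; supremum of the empty set (possible only when n = 1, |q| < 1) taken as 0.\<close>
definition wq :: "complex \<Rightarrow> complex^'n^'n \<Rightarrow> real" where
  "wq q A = (let S = {cmod (cinner (A *v x) y) | x y. norm x = 1 \<and> norm y = 1 \<and> cinner x y = q}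
             in if S = {} then 0 else Sup S)"

definition numrange :: "complex^'n^'n \<Rightarrow> complex set" where
  "numrange A = {cinner (A *v x) x | x. norm x = 1}"

definition sector :: "real \<Rightarrow> complex set" where
  "sector \<alpha> = {z. Re z > 0 \<and> \<bar>Im z\<bar> \<le> tan \<alpha> * Re z}"

definition PiS :: "real \<Rightarrow> (complex^'n^'n) set" where
  "PiS \<alpha> = {A. numrange A \<subseteq> sector \<alpha>}"

end

(* Since w_q(X) <= ||X|| and ||ACB +- BDA|| <= 2 max(||C||,||D||) ||A|| ||B||, it suffices to show
   |q| cos(alpha) ||A|| <= w_q(A) for A in Pi_{s,alpha}. This splits into two inequalities for the
   numerical radius w(A):

   |q| w(A) <= w_q(A): for a unit vector x and a unit vector z orthogonal to x (which exists
   whenever |q| < 1 is attained), the unit vectors y = cnj(q) x +- sqrt(1 - |q|^2) z satisfy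
   <x, y> = q and average to cnj(q) x, so |q| |<Ax, x>| is at most the mean of |<Ax, y>|.

   cos(alpha) ||A|| <= w(A): the values <A(u - w v), u - w v> for |w| = 1 lie in the closed sector,
   and combining this condition at two suitable points w gives
   2 cos(alpha) |<Au, v>| <= Re <Au, u> + Re <Av, v>; take v = Au / ||Au||. *)

theory Submission
  imports Defs
begin

lemma cinner_add_left: "cinner (x + y) z = cinner x z + cinner y z"
  by (simp add: cinner_def distrib_right sum.distrib)

lemma cinner_add_right: "cinner z (x + y) = cinner z x + cinner z y"
  by (simp add: cinner_def distrib_left sum.distrib)

lemma cinner_diff_left: "cinner (x - y) z = cinner x z - cinner y z"
  by (simp add: cinner_def left_diff_distrib sum_subtractf)

lemma cinner_diff_right: "cinner z (x - y) = cinner z x - cinner z y"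
  by (simp add: cinner_def right_diff_distrib sum_subtractf)

lemma cinner_scale_left: "cinner (c *s x) z = c * cinner x z"
  by (simp add: cinner_def sum_distrib_left mult.assoc)

lemma cinner_scale_right: "cinner z (c *s x) = cnj c * cinner z x"
  by (simp add: cinner_def sum_distrib_left mult_ac)

lemma cinner_commute: "cinner y x = cnj (cinner x y)"
  by (simp add: cinner_def mult.commute)

lemma cinner_self: "cinner x x = complex_of_real ((norm x)\<^sup>2)"
proof -
  have "(norm x)\<^sup>2 = (\<Sum>i\<in>UNIV. (cmod (x $ i))\<^sup>2)"
    by (simp add: norm_vec_def L2_set_def sum_nonneg)
  then show ?thesis
    by (simp add: cinner_def complex_norm_square[symmetric])
qed

lemma cinner_Cauchy_Schwarz: "cmod (cinner x y) \<le> norm x * norm y"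
proof -
  have "cmod (cinner x y) \<le> (\<Sum>i\<in>UNIV. cmod (x $ i * cnj (y $ i)))"
    unfolding cinner_def by (rule norm_sum)
  also have "\<dots> = (\<Sum>i\<in>UNIV. \<bar>cmod (x $ i)\<bar> * \<bar>cmod (y $ i)\<bar>)"
    by (simp add: norm_mult)
  also have "\<dots> \<le> norm x * norm y"
    unfolding norm_vec_def by (rule L2_set_mult_ineq)
  finally show ?thesis .
qed

lemma norm_smult: "norm (c *s x) = cmod c * norm (x :: complex^'n)"
  unfolding norm_vec_def by (simp add: norm_mult L2_set_right_distrib)

lemma sgn_vec_eq_smult: "sgn x = complex_of_real (inverse (norm x)) *s (x :: complex^'n)"
  by (simp add: vec_eq_iff sgn_vec_def scaleR_conv_of_real[where 'a=complex])

lemma cinner_sgn_right: "cinner x (sgn x) = complex_of_real (norm x)"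
  by (cases "x = 0") (simp_all add: sgn_vec_eq_smult cinner_scale_right cinner_self power2_eq_square)

lemma opnorm_nonneg: "0 \<le> opnorm A"
  unfolding opnorm_def by (rule onorm_pos_le) simp

lemma norm_matrix_vector_mult_le: "norm (A *v x) \<le> opnorm A * norm x"
  unfolding opnorm_def by (rule onorm) simp

lemma opnorm_le_unit:
  assumes "\<And>x. norm x = 1 \<Longrightarrow> norm (A *v x) \<le> b"
  shows "opnorm (A :: complex^'n^'n) \<le> b"
  unfolding opnorm_def
proof (rule onorm_le)
  fix x :: "complex^'n"
  show "norm (A *v x) \<le> b * norm x"
  proof (cases "x = 0")
    case False
    have "A *v x = complex_of_real (norm x) *s (A *v sgn x)"
      using False by (simp add: sgn_vec_eq_smult vector_scalar_commute)
    then show ?thesis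
      using assms[of "sgn x"] False by (simp add: norm_smult norm_sgn mult.commute)
  qed simp
qed

lemma opnorm_matrix_mult_le: "opnorm (A ** B) \<le> opnorm A * opnorm (B :: complex^'n^'n)"
proof -
  have "onorm ((*v) A \<circ> (*v) B) \<le> onorm ((*v) A) * onorm ((*v) B)"
    by (rule onorm_compose) simp_all
  then show ?thesis
    by (simp add: opnorm_def comp_def matrix_vector_mul_assoc)
qed

lemma opnorm_add_le: "opnorm (A + B) \<le> opnorm A + opnorm (B :: complex^'n^'n)"
  unfolding opnorm_def matrix_vector_mult_add_rdistrib by (rule onorm_triangle) simp_all

lemma opnorm_diff_le: "opnorm (A - B) \<le> opnorm A + opnorm (B :: complex^'n^'n)"
proof -
  have "onorm (\<lambda>x. A *v x + - (B *v x)) \<le> onorm ((*v) A) + onorm (\<lambda>x. - (B *v x))"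
    by (rule onorm_triangle) (simp_all add: bounded_linear_minus)
  then show ?thesis
    by (simp add: opnorm_def onorm_neg matrix_vector_mult_diff_rdistrib)
qed

lemma wq_eq_0_if_no_unit_pair:
  assumes "\<nexists>x y :: complex^'n. norm x = 1 \<and> norm y = 1 \<and> cinner x y = q"
  shows "wq q (X :: complex^'n^'n) = 0"
  using assms unfolding wq_def Let_def by auto

lemma wq_le:
  assumes "\<And>x y. norm x = 1 \<Longrightarrow> norm y = 1 \<Longrightarrow> cinner x y = q \<Longrightarrow> cmod (cinner (X *v x) y) \<le> b"
    and "0 \<le> b"
  shows "wq q X \<le> b"
proof -
  let ?S = "{cmod (cinner (X *v x) y) | x y. norm x = 1 \<and> norm y = 1 \<and> cinner x y = q}"
  have "Sup ?S \<le> b" if "?S \<noteq> {}"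
    using that assms(1) by (intro cSup_least) auto
  then show ?thesis
    using assms(2) unfolding wq_def Let_def by auto
qed

lemma cinner_unit_le_opnorm:
  assumes "norm x = 1" "norm y = 1"
  shows "cmod (cinner (X *v x) y) \<le> opnorm X"
  using cinner_Cauchy_Schwarz[of "X *v x" y] norm_matrix_vector_mult_le[of X x] assms by simp

lemma wq_le_opnorm: "wq q X \<le> opnorm X"
  by (intro wq_le cinner_unit_le_opnorm opnorm_nonneg)

lemma wq_ge:
  assumes "norm x = 1" "norm y = 1" "cinner x y = q"
  shows "cmod (cinner (X *v x) y) \<le> wq q X"
proof -
  let ?S = "{cmod (cinner (X *v x) y) | x y. norm x = 1 \<and> norm y = 1 \<and> cinner x y = q}"
  have "bdd_above ?S"
    by (auto intro!: bdd_aboveI cinner_unit_le_opnorm)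
  moreover have "cmod (cinner (X *v x) y) \<in> ?S"
    using assms by blast
  ultimately show ?thesis
    unfolding wq_def Let_def by (auto intro: cSup_upper)
qed

lemma norm_eq_1_iff_cinner_self: "norm x = 1 \<longleftrightarrow> cinner x x = 1"
proof -
  have "cinner x x = 1 \<longleftrightarrow> (norm x)\<^sup>2 = 1"
    unfolding cinner_self by (metis of_real_1 of_real_eq_iff)
  then show ?thesis
    using power2_eq_iff_nonneg[of "norm x" 1] by simp
qed

lemma cmod_cinner_one_index:
  assumes "\<And>i j :: 'n. i = j"
  shows "cmod (cinner x y) = norm x * norm (y :: complex^'n)"
proof -
  obtain i :: 'n where U: "UNIV = {i}"
    using assms by blast
  show ?thesis
    unfolding cinner_def norm_vec_def U by (simp add: norm_mult)
qed

lemma exists_orthogonal_unit_vector: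
  fixes x x0 y0 :: "complex^'n"
  assumes "norm x0 = 1" "norm y0 = 1" "cmod (cinner x0 y0) < 1"
  shows "\<exists>z. norm z = 1 \<and> cinner x z = 0"
proof -
  obtain i j :: 'n where "i \<noteq> j"
    using cmod_cinner_one_index[of x0 y0] assms by force
  obtain z :: "complex^'n" where z: "z \<noteq> 0" "cinner x z = 0"
  proof (cases "x $ i = 0 \<and> x $ j = 0")
    case True
    have "cinner x (axis i 1) = 0"
      using True by (simp add: cinner_def axis_def if_distrib cong: if_cong)
    moreover have "axis i (1::complex) \<noteq> 0"
      by (metis axis_nth one_neq_zero zero_index)
    ultimately show ?thesis
      using that by blast
  next
    case False
    let ?z = "\<chi> k. if k = i then cnj (x $ j) else if k = j then - cnj (x $ i) else 0"
    have "?z \<noteq> 0"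
      using False \<open>i \<noteq> j\<close> by (auto simp: vec_eq_iff)
    moreover have "cinner x ?z = 0"
      using \<open>i \<noteq> j\<close> by (simp add: cinner_def if_distrib sum.If_cases mult.commute)
    ultimately show ?thesis
      using that by blast
  qed
  have "norm (sgn z) = 1" "cinner x (sgn z) = 0"
    using z by (simp add: norm_sgn, simp add: sgn_vec_eq_smult cinner_scale_right)
  then show ?thesis
    by blast
qed

lemma exists_unit_pair_with_sum:
  fixes x :: "complex^'n"
  assumes "\<exists>x0 y0 :: complex^'n. norm x0 = 1 \<and> norm y0 = 1 \<and> cinner x0 y0 = q"
    and "cmod q \<le> 1" and "norm x = 1"
  shows "\<exists>y1 y2. norm y1 = 1 \<and> norm y2 = 1 \<and> cinner x y1 = q \<and> cinner x y2 = q
                 \<and> y1 + y2 = (2 * cnj q) *s x"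
proof (cases "cmod q = 1")
  case True
  let ?y = "cnj q *s x"
  have "norm ?y = 1" "cinner x ?y = q"
    using True \<open>norm x = 1\<close> by (simp_all add: norm_smult cinner_scale_right cinner_self)
  moreover have "?y + ?y = (2 * cnj q) *s x"
    by (simp add: vec_eq_iff)
  ultimately show ?thesis
    by blast
next
  case False
  obtain x0 y0 :: "complex^'n" where "norm x0 = 1" "norm y0 = 1" "cinner x0 y0 = q"
    using assms(1) by blast
  then obtain z where z: "norm z = 1" "cinner x z = 0"
    using exists_orthogonal_unit_vector[of x0 y0 x] False \<open>cmod q \<le> 1\<close> by auto
  have xx: "cinner x x = 1" and zz: "cinner z z = 1" and zx: "cinner z x = 0"
    using \<open>norm x = 1\<close> z by (simp_all add: cinner_self cinner_commute[of z x])
  define s where "s = sqrt (1 - (cmod q)\<^sup>2)"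
  have s2: "s\<^sup>2 = 1 - (cmod q)\<^sup>2"
    using \<open>cmod q \<le> 1\<close> by (simp add: s_def abs_square_le_1)
  define y where "y e = cnj q *s x + complex_of_real (e * s) *s z" for e :: real
  have y: "norm (y e) = 1 \<and> cinner x (y e) = q" if "e\<^sup>2 = 1" for e
  proof
    have "cinner (y e) (y e) = complex_of_real ((cmod q)\<^sup>2 + e\<^sup>2 * s\<^sup>2)"
      using xx zz z zx
      by (simp add: y_def cinner_add_left cinner_add_right cinner_scale_left cinner_scale_right
          complex_norm_square[symmetric] power_mult_distrib power2_eq_square)
    then show "norm (y e) = 1"
      using that s2 by (simp add: norm_eq_1_iff_cinner_self)
    show "cinner x (y e) = q"
      using xx z by (simp add: y_def cinner_add_right cinner_scale_right)
  qed
  have "y 1 + y (- 1) = (2 * cnj q) *s x"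
    by (simp add: y_def vec_eq_iff)
  moreover have "norm (y 1) = 1 \<and> cinner x (y 1) = q" "norm (y (- 1)) = 1 \<and> cinner x (y (- 1)) = q"
    by (simp_all add: y)
  ultimately show ?thesis
    by blast
qed

lemma wq_ge_cinner_self:
  fixes A :: "complex^'n^'n"
  assumes "\<exists>x0 y0 :: complex^'n. norm x0 = 1 \<and> norm y0 = 1 \<and> cinner x0 y0 = q"
    and "cmod q \<le> 1" and "norm (x :: complex^'n) = 1"
  shows "cmod q * cmod (cinner (A *v x) x) \<le> wq q A"
proof -
  obtain y1 y2 where y: "norm y1 = 1" "norm y2 = 1" "cinner x y1 = q" "cinner x y2 = q"
    and sum: "y1 + y2 = (2 * cnj q) *s x"
    using exists_unit_pair_with_sum[OF assms] by blast
  have "2 * (q * cinner (A *v x) x) = cinner (A *v x) y1 + cinner (A *v x) y2"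
    by (simp add: cinner_add_right[symmetric] sum cinner_scale_right)
  then have "2 * (cmod q * cmod (cinner (A *v x) x))
             \<le> cmod (cinner (A *v x) y1) + cmod (cinner (A *v x) y2)"
    by (metis norm_mult norm_numeral norm_triangle_ineq)
  also have "\<dots> \<le> 2 * wq q A"
    using wq_ge[OF assms(3) y(1,3), of A] wq_ge[OF assms(3) y(2,4), of A] by simp
  finally show ?thesis
    by simp
qed

definition numradius :: "complex^'n^'n \<Rightarrow> real" where
  "numradius A = Sup (cmod ` numrange A)"

lemma numradius_ge:
  assumes "norm x = 1"
  shows "cmod (cinner (A *v x) x) \<le> numradius A"
proof -
  have "bdd_above (cmod ` numrange A)"
    by (auto simp: numrange_def intro!: bdd_aboveI cinner_unit_le_opnorm)
  moreover have "cinner (A *v x) x \<in> numrange A"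
    using assms by (auto simp: numrange_def)
  ultimately show ?thesis
    unfolding numradius_def by (simp add: cSup_upper)
qed

lemma numradius_le:
  fixes A :: "complex^'n^'n"
  assumes "\<And>x. norm x = 1 \<Longrightarrow> cmod (cinner (A *v x) x) \<le> b"
  shows "numradius A \<le> b"
proof -
  have "norm (sgn (1 :: complex^'n)) = 1"
    by (simp add: norm_sgn vec_eq_iff)
  then have "numrange A \<noteq> {}"
    unfolding numrange_def by blast
  then show ?thesis
    unfolding numradius_def using assms by (auto simp: numrange_def intro!: cSup_least)
qed

lemma wq_ge_numradius:
  assumes "\<exists>x0 y0 :: complex^'n. norm x0 = 1 \<and> norm y0 = 1 \<and> cinner x0 y0 = q"
    and "0 < cmod q" "cmod q \<le> 1"
  shows "cmod q * numradius A \<le> wq q (A :: complex^'n^'n)"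
proof -
  have "numradius A \<le> wq q A / cmod q"
    using wq_ge_cinner_self[OF assms(1,3)] \<open>0 < cmod q\<close>
    by (intro numradius_le) (simp add: pos_le_divide_eq mult.commute)
  then show ?thesis
    using \<open>0 < cmod q\<close> by (simp add: pos_le_divide_eq mult.commute)
qed

definition closed_sector :: "real \<Rightarrow> complex set" where
  "closed_sector \<alpha> = {z. 0 \<le> Re z \<and> cos \<alpha> * \<bar>Im z\<bar> \<le> sin \<alpha> * Re z}"

lemma cos_pos_sector_angle: "0 \<le> \<alpha> \<Longrightarrow> \<alpha> < pi / 2 \<Longrightarrow> 0 < cos \<alpha>"
  by (intro cos_gt_zero_pi) auto

lemma sector_subset_closed_sector:
  assumes "0 \<le> \<alpha>" "\<alpha> < pi / 2"
  shows "sector \<alpha> \<subseteq> closed_sector \<alpha>"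
proof
  fix z assume "z \<in> sector \<alpha>"
  then have "0 < Re z" "\<bar>Im z\<bar> \<le> sin \<alpha> / cos \<alpha> * Re z"
    by (auto simp: sector_def tan_def)
  then show "z \<in> closed_sector \<alpha>"
    using cos_pos_sector_angle[OF assms] by (simp add: closed_sector_def field_simps)
qed

lemma closed_sector_scale:
  "0 \<le> c \<Longrightarrow> z \<in> closed_sector \<alpha> \<Longrightarrow> complex_of_real c * z \<in> closed_sector \<alpha>"
  unfolding closed_sector_def by (auto simp: abs_mult mult.left_commute mult_left_mono)

lemma PiS_quadratic_form_in_closed_sector:
  assumes "A \<in> PiS \<alpha>" "0 \<le> \<alpha>" "\<alpha> < pi / 2"
  shows "cinner (A *v w) w \<in> closed_sector \<alpha>"
proof (cases "w = 0")
  case True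
  then show ?thesis
    by (simp add: closed_sector_def cinner_def)
next
  case False
  have "norm (sgn w) = 1"
    using False by (simp add: norm_sgn)
  then have "cinner (A *v sgn w) (sgn w) \<in> sector \<alpha>"
    using assms(1) unfolding PiS_def numrange_def by blast
  then have "cinner (A *v sgn w) (sgn w) \<in> closed_sector \<alpha>"
    using sector_subset_closed_sector[OF assms(2,3)] by blast
  moreover have "cinner (A *v w) w = complex_of_real ((norm w)\<^sup>2) * cinner (A *v sgn w) (sgn w)"
    using False
    by (simp add: sgn_vec_eq_smult vector_scalar_commute cinner_scale_left cinner_scale_right
        power2_eq_square field_simps)
  ultimately show ?thesis
    by (metis closed_sector_scale zero_le_power2)
qed

lemma closed_sector_circle_bound_real:
  assumes f: "\<And>w. cmod w = 1 \<Longrightarrow> E - cnj w * complex_of_real a - w * t \<in> closed_sector \<alpha>"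
    and "0 \<le> \<alpha>" "\<alpha> < pi / 2"
  shows "2 * cos \<alpha> * a \<le> Re E"
proof -
  let ?f = "\<lambda>w. E - cnj w * complex_of_real a - w * t"
  have Re_f: "0 \<le> Re (?f w)" and Im_f: "cos \<alpha> * \<bar>Im (?f w)\<bar> \<le> sin \<alpha> * Re (?f w)"
    if "cmod w = 1" for w
    using f[OF that] by (simp_all add: closed_sector_def)
  show ?thesis
  proof (cases "\<alpha> = 0")
    case True
    then have Im_0: "Im (?f w) = 0" if "cmod w = 1" for w
      using Im_f[OF that] by simp
    have "Im (E - a - t) = 0" "Im (E + a + t) = 0" "Im (E - \<i> * a + \<i> * t) = 0"
      using Im_0[of 1] Im_0[of "- 1"] Im_0[of "- \<i>"] by simp_all
    then have "t = complex_of_real a"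
      by (simp add: complex_eq_iff)
    then show ?thesis
      using Re_f[of 1] True by simp
  next
    case False
    \<comment> \<open>test the sector condition at \<open>w = cis (\<plusminus>\<alpha>)\<close>: the unknown \<open>t\<close> cancels from
      the sum of the two inequalities\<close>
    have "0 < sin \<alpha>"
      using False assms(2,3) by (intro sin_gt_zero) auto
    have cos_nonneg: "0 \<le> cos \<alpha>"
      using assms(2,3) by (intro cos_ge_zero) auto
    have abs_bounds: "cos \<alpha> * x \<le> cos \<alpha> * \<bar>x\<bar>" "- (cos \<alpha> * x) \<le> cos \<alpha> * \<bar>x\<bar>" for x
      using mult_left_mono[OF abs_ge_self cos_nonneg] mult_left_mono[OF abs_ge_minus_self cos_nonneg]
      by simp_all
    define z\<^sub>1 where "z\<^sub>1 = ?f (cis \<alpha>)"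
    define z\<^sub>2 where "z\<^sub>2 = ?f (cis (- \<alpha>))"
    have "cos \<alpha> * \<bar>Im z\<^sub>1\<bar> \<le> sin \<alpha> * Re z\<^sub>1" "cos \<alpha> * \<bar>Im z\<^sub>2\<bar> \<le> sin \<alpha> * Re z\<^sub>2"
      unfolding z\<^sub>1_def z\<^sub>2_def by (simp_all only: Im_f norm_cis)
    moreover have "sin \<alpha> * Re z\<^sub>1 - cos \<alpha> * Im z\<^sub>1 + sin \<alpha> * Re z\<^sub>2 + cos \<alpha> * Im z\<^sub>2
                   = 2 * sin \<alpha> * (Re E - 2 * cos \<alpha> * a)"
      by (simp add: z\<^sub>1_def z\<^sub>2_def cis_cnj algebra_simps)
    ultimately have "0 \<le> sin \<alpha> * (Re E - 2 * cos \<alpha> * a)"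
      using abs_bounds(1)[of "Im z\<^sub>1"] abs_bounds(2)[of "Im z\<^sub>2"] by linarith
    then show ?thesis
      using \<open>0 < sin \<alpha>\<close> by (simp add: zero_le_mult_iff)
  qed
qed

lemma closed_sector_circle_bound:
  assumes f: "\<And>w. cmod w = 1 \<Longrightarrow> E - cnj w * p - w * r \<in> closed_sector \<alpha>"
    and "0 \<le> \<alpha>" "\<alpha> < pi / 2"
  shows "2 * cos \<alpha> * cmod p \<le> Re E"
proof -
  \<comment> \<open>substituting \<open>\<sigma> * w\<close> for \<open>w\<close> makes the coefficient of \<open>cnj w\<close> real\<close>
  define \<sigma> where "\<sigma> = (if p = 0 then 1 else sgn p)"
  have "cnj p * p = complex_of_real (cmod p) * complex_of_real (cmod p)"
    by (metis complex_norm_square mult.commute of_real_mult power2_eq_square)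
  then have \<sigma>: "cmod \<sigma> = 1" "cnj \<sigma> * p = complex_of_real (cmod p)"
    by (simp add: \<sigma>_def norm_sgn, simp add: \<sigma>_def sgn_eq)
  have "E - cnj w * complex_of_real (cmod p) - w * (\<sigma> * r) \<in> closed_sector \<alpha>" if "cmod w = 1" for w
  proof -
    have "E - cnj (\<sigma> * w) * p - \<sigma> * w * r = E - cnj w * complex_of_real (cmod p) - w * (\<sigma> * r)"
      by (simp add: \<sigma>(2)[symmetric] mult_ac)
    moreover have "cmod (\<sigma> * w) = 1"
      using that \<sigma>(1) by (simp add: norm_mult)
    ultimately show ?thesis
      using f by metis
  qed
  then show ?thesis
    using assms(2,3) by (rule closed_sector_circle_bound_real)
qed

lemma cinner_quadratic_form_diff:
  "cinner (A *v (u - w *s v)) (u - w *s v) =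
     cinner (A *v u) u - cnj w * cinner (A *v u) v - w * cinner (A *v v) u
       + (w * cnj w) * cinner (A *v v) v"
  by (simp add: matrix_vector_mult_diff_distrib vector_scalar_commute cinner_diff_left
      cinner_diff_right cinner_scale_left cinner_scale_right algebra_simps)

lemma PiS_off_diagonal_bound:
  assumes "A \<in> PiS \<alpha>" "0 \<le> \<alpha>" "\<alpha> < pi / 2"
  shows "2 * cos \<alpha> * cmod (cinner (A *v u) v) \<le> Re (cinner (A *v u) u) + Re (cinner (A *v v) v)"
proof -
  let ?E = "cinner (A *v u) u + cinner (A *v v) v"
  have "?E - cnj w * cinner (A *v u) v - w * cinner (A *v v) u \<in> closed_sector \<alpha>"
    if "cmod w = 1" for w
  proof -
    have "w * cnj w = 1"
      using that by (simp add: complex_norm_square[symmetric])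
    then have "cinner (A *v (u - w *s v)) (u - w *s v)
               = ?E - cnj w * cinner (A *v u) v - w * cinner (A *v v) u"
      unfolding cinner_quadratic_form_diff by simp
    then show ?thesis
      using PiS_quadratic_form_in_closed_sector[OF assms] by metis
  qed
  from closed_sector_circle_bound[OF this assms(2,3)] show ?thesis
    by simp
qed

lemma PiS_opnorm_le_numradius:
  fixes A :: "complex^'n^'n"
  assumes "A \<in> PiS \<alpha>" "0 \<le> \<alpha>" "\<alpha> < pi / 2"
  shows "cos \<alpha> * opnorm A \<le> numradius A"
proof -
  have cos_pos: "0 < cos \<alpha>"
    using assms(2,3) by (rule cos_pos_sector_angle)
  have "opnorm A \<le> numradius A / cos \<alpha>"
  proof (rule opnorm_le_unit)
    fix u :: "complex^'n" assume u: "norm u = 1"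
    show "norm (A *v u) \<le> numradius A / cos \<alpha>"
    proof (cases "A *v u = 0")
      case True
      then show ?thesis
        using numradius_ge[OF u, of A] cos_pos by (simp add: cinner_def)
    next
      case False
      define v where "v = sgn (A *v u)"
      have v: "norm v = 1" "cinner (A *v u) v = complex_of_real (norm (A *v u))"
        using False by (simp_all add: v_def norm_sgn cinner_sgn_right)
      have "2 * cos \<alpha> * norm (A *v u) \<le> Re (cinner (A *v u) u) + Re (cinner (A *v v) v)"
        using PiS_off_diagonal_bound[OF assms, of u v] v(2) by simp
      also have "\<dots> \<le> cmod (cinner (A *v u) u) + cmod (cinner (A *v v) v)"
        by (intro add_mono complex_Re_le_cmod)
      also have "\<dots> \<le> 2 * numradius A"
        using numradius_ge[OF u, of A] numradius_ge[OF v(1), of A] by simp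
      finally show ?thesis
        using cos_pos by (simp add: pos_le_divide_eq mult.commute)
    qed
  qed
  then show ?thesis
    using cos_pos by (simp add: pos_le_divide_eq mult.commute)
qed

lemma opnorm_matrix_mult3_le: "opnorm (A ** B ** C) \<le> opnorm A * opnorm B * opnorm (C :: complex^'n^'n)"
  by (meson opnorm_matrix_mult_le opnorm_nonneg mult_right_mono order_trans)

lemma PiS_wq_le_of_opnorm_le:
  fixes A X :: "complex^'n^'n"
  assumes "A \<in> PiS \<alpha>" "0 \<le> \<alpha>" "\<alpha> < pi / 2" "0 < cmod q" "cmod q \<le> 1"
    and "opnorm X \<le> K * opnorm A" "0 \<le> K"
  shows "cmod q * wq q X \<le> K / cos \<alpha> * wq q A"
proof (cases "\<exists>x y :: complex^'n. norm x = 1 \<and> norm y = 1 \<and> cinner x y = q")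
  case False
  then show ?thesis
    by (simp add: wq_eq_0_if_no_unit_pair)
next
  case True
  have cos_pos: "0 < cos \<alpha>"
    using assms(2,3) by (rule cos_pos_sector_angle)
  have "cmod q * wq q X \<le> cmod q * opnorm X"
    by (rule mult_left_mono[OF wq_le_opnorm norm_ge_zero])
  also have "\<dots> \<le> K * (cmod q * opnorm A)"
    using mult_left_mono[OF assms(6) norm_ge_zero, of q] by (simp add: mult_ac)
  also have "cmod q * opnorm A \<le> cmod q * (numradius A / cos \<alpha>)"
    using PiS_opnorm_le_numradius[OF assms(1-3)] cos_pos
    by (intro mult_left_mono) (simp_all add: pos_le_divide_eq mult.commute)
  also have "\<dots> \<le> wq q A / cos \<alpha>"
    using wq_ge_numradius[OF True assms(4,5)] cos_pos by (simp add: divide_right_mono)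
  finally show ?thesis
    using assms(7) by (simp add: mult_left_mono)
qed

theorem theorem2p18:
  fixes A B C D :: "complex^'n^'n" and q :: complex and \<alpha> :: real
  assumes "0 \<le> \<alpha>" and "\<alpha> < pi / 2"
    and "A \<in> PiS \<alpha>"
    and "0 < cmod q" and "cmod q \<le> 1"
  shows "cmod q * wq q (A ** C ** B + B ** D ** A)
           \<le> 2 * (1 / cos \<alpha>) * max (opnorm C) (opnorm D) * wq q A * opnorm B
       \<and> cmod q * wq q (A ** C ** B - B ** D ** A)
           \<le> 2 * (1 / cos \<alpha>) * max (opnorm C) (opnorm D) * wq q A * opnorm B"
proof -
  define M where "M = max (opnorm C) (opnorm D)"
  define K where "K = 2 * M * opnorm B"
  have "0 \<le> K"
    using opnorm_nonneg[of B] opnorm_nonneg[of C] by (simp add: K_def M_def)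
  have "opnorm A * opnorm C * opnorm B \<le> opnorm A * M * opnorm B"
    and "opnorm B * opnorm D * opnorm A \<le> opnorm B * M * opnorm A"
    by (intro mult_right_mono mult_left_mono; simp add: M_def opnorm_nonneg)+
  then have "opnorm (A ** C ** B) + opnorm (B ** D ** A) \<le> K * opnorm A"
    using opnorm_matrix_mult3_le[of A C B] opnorm_matrix_mult3_le[of B D A]
    by (simp add: K_def algebra_simps)
  then have "opnorm (A ** C ** B + B ** D ** A) \<le> K * opnorm A"
    and "opnorm (A ** C ** B - B ** D ** A) \<le> K * opnorm A"
    using opnorm_add_le opnorm_diff_le order_trans by blast+
  moreover have "cmod q * wq q X \<le> 2 * (1 / cos \<alpha>) * M * wq q A * opnorm B"
    if "opnorm X \<le> K * opnorm A" for X :: "complex^'n^'n"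
  proof -
    have "cmod q * wq q X \<le> K / cos \<alpha> * wq q A"
      using PiS_wq_le_of_opnorm_le[OF assms(3,1,2,4,5) that \<open>0 \<le> K\<close>] .
    also have "\<dots> = 2 * (1 / cos \<alpha>) * M * wq q A * opnorm B"
      by (simp add: K_def)
    finally show ?thesis .
  qed
  ultimately show ?thesis
    unfolding M_def by blast
qed

end
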